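(* For all $r, s > 0$, $$\theta_3(rs)\,\theta_3\!\left(\frac{r}{s}\right) \ge \theta_3(r)^2 \qquad\text{and}\qquad \theta_4(rs)\,\theta_4\!\left(\frac{r}{s}\right) \le \theta_4(r)^2,$$ with equality in either inequality only for $s = 1$.
   Context: For $s>0$, $\theta_3(s) = \sum_{k\in\mathbb{Z}} e^{-\pi k^2 s}$ and $\theta_4(s) = \sum_{k\in\mathbb{Z}} (-1)^k e^{-\pi k^2 s}$. *)

theory Defs
  imports "HOL-Analysis.Analysis"
begin

definition theta3 :: "real \<Rightarrow> real" where
  "theta3 s = (\<Sum>\<^sub>\<infinity> k::int. exp (- pi * (of_int k)^2 * s))"

definition theta4 :: "real \<Rightarrow> real" where
  "theta4 s = (\<Sum>\<^sub>\<infinity> k::int. (-1) powi k * exp (- pi * (of_int k)^2 * s))"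

end

theory Submission
  imports Defs "HOL-Probability.Characteristic_Functions" "HOL-Real_Asymp.Real_Asymp"
begin

(* Write G(u) = ln \<theta>(e^u). The two inequalities say that G is strictly convex for \<theta>\<^sub>3 and strictly
   concave for \<theta>\<^sub>4, i.e. that G' is strictly monotone. Differentiating the series gives
   G'' = K / \<theta>\<^sup>2 with K = (M\<^sub>2 - M\<^sub>1) M\<^sub>0 - M\<^sub>1\<^sup>2, where M\<^sub>k are the moments
   \<Sum> c\<^sub>n t\<^sub>n\<^sup>k e^(-t\<^sub>n) of the exponents t\<^sub>n; elementary estimates of these series give K > 0 for
   \<theta>\<^sub>3 on x \<ge> 1, and K < 0 for \<theta>\<^sub>4 on x \<ge> 7/8 and for \<theta>\<^sub>2 on x \<ge> 8/7. The Jacobi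
   transformations \<theta>\<^sub>3(1/x) = \<surd>x \<theta>\<^sub>3(x) and \<theta>\<^sub>4(1/x) = \<surd>x \<theta>\<^sub>2(x), obtained from Poisson
   summation for the Gaussian, give G\<^sub>3(-u) = G\<^sub>3(u) + u/2 and G\<^sub>4(-u) = G\<^sub>2(u) + u/2, which carry
   the monotonicity of G' over to the other half-line. *)

section \<open>The Gaussian and its Fourier transform\<close>

lemma summable_gaussian:
  fixes c :: real
  assumes "c > 0"
  shows "summable (\<lambda>n::nat. exp (- c * real n ^ 2))"
proof (rule summable_comparison_test_bigo)
  show "summable (\<lambda>n::nat. norm (1 / real n ^ 2))"
    using inverse_power_summable[of 2] by (simp add: divide_inverse)
  show "(\<lambda>n::nat. exp (- c * real n ^ 2)) \<in> O(\<lambda>n. 1 / real n ^ 2)"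
    using assms by real_asymp
qed

lemma std_normal_density_cos_integral:
  "integrable lborel (\<lambda>v. std_normal_density v * cos (t * v)) \<and>
   (LINT v|lborel. std_normal_density v * cos (t * v)) = exp (- (t^2) / 2)"
proof -
  have "integrable lborel std_normal_density"
    using integrable_std_normal_moment[of 0] by simp
  then have int: "integrable lborel (\<lambda>v. std_normal_density v *\<^sub>R iexp (t * v))"
    by (rule Bochner_Integration.integrable_bound) (auto simp: norm_mult normal_density_nonneg)
  have "char std_normal_distribution t = (CLINT v|lborel. std_normal_density v *\<^sub>R iexp (t * v))"
    unfolding char_def by (subst integral_density) (auto simp: normal_density_nonneg)
  then have char: "(CLINT v|lborel. std_normal_density v *\<^sub>R iexp (t * v)) = exp (- (t^2) / 2)"
    using char_std_normal_distribution by simp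
  have re: "\<And>v. Re (std_normal_density v *\<^sub>R iexp (t * v)) = std_normal_density v * cos (t * v)"
    by (simp add: Re_exp)
  show ?thesis
    using integrable_Re[OF int] integral_Re[OF int] char unfolding re by simp
qed

lemma has_integral_gaussian_cos:
  fixes x w :: real
  assumes x: "x > 0"
  shows "((\<lambda>u. exp (-pi*x*u^2) * cos (w*u)) has_integral exp (- (w^2) / (4*pi*x)) / sqrt x) UNIV"
proof -
  define c where "c = sqrt (2*pi*x)"
  have c: "c > 0" "c^2 = 2*pi*x" using x by (simp_all add: c_def)
  define t where "t = w / c"
  obtain I: "integrable lborel (\<lambda>v. std_normal_density v * cos (t * v))"
     and E: "(LINT v|lborel. std_normal_density v * cos (t * v)) = exp (- (t^2) / 2)"
    using std_normal_density_cos_integral by blast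
  have affine: "std_normal_density (0 + c*u) * cos (t*(0 + c*u))
      = (1/sqrt(2*pi)) * (exp (-pi*x*u^2) * cos (w*u))" for u
    using c by (simp add: std_normal_density_def t_def power_mult_distrib)
  have "integrable lborel (\<lambda>u. (1/sqrt(2*pi)) * (exp (-pi*x*u^2) * cos (w*u)))"
    using lborel_integrable_real_affine[OF I, of c 0] c affine by simp
  then have int: "integrable lborel (\<lambda>u. exp (-pi*x*u^2) * cos (w*u))"
    using integrable_mult_right[of "sqrt(2*pi)"] by fastforce
  have "exp (- (t^2) / 2) = c / sqrt(2*pi) * (LINT u|lborel. exp (-pi*x*u^2) * cos (w*u))"
    using lborel_integral_real_affine[of c "\<lambda>v. std_normal_density v * cos (t * v)" 0] c E affine
    by simp
  then have "(LINT u|lborel. exp (-pi*x*u^2) * cos (w*u)) = exp (- (t^2) / 2) * sqrt(2*pi) / c"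
    using c by (simp add: field_simps)
  also have "\<dots> = exp (- (w^2) / (4*pi*x)) / sqrt x"
    using c x by (simp add: t_def c_def power_divide real_sqrt_mult field_simps)
  finally show ?thesis
    using has_integral_integral_lborel[OF int] by simp
qed

section \<open>Poisson summation for the Gaussian\<close>

definition gauss :: "real \<Rightarrow> real \<Rightarrow> real" where
  "gauss x u = exp (-pi*x*u^2)"

text \<open>The periodization \<open>\<Sum>\<^sub>k\<^sub>\<in>\<^sub>\<int> gauss x (t + k)\<close>, with the terms for \<open>k = n\<close> and \<open>k = -n-1\<close> paired.\<close>

definition gauss_periodization :: "real \<Rightarrow> real \<Rightarrow> real" where
  "gauss_periodization x t = (\<Sum>n. gauss x (t + real n) + gauss x (t - real n - 1))"

definition gauss_cos_coeff :: "real \<Rightarrow> nat \<Rightarrow> real" where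
  "gauss_cos_coeff x m = (if m = 0 then 1 else 2) * (exp (- pi * (real m)^2 / x) / sqrt x)"

definition gauss_cos_series :: "real \<Rightarrow> real \<Rightarrow> real" where
  "gauss_cos_series x t = (\<Sum>m. gauss_cos_coeff x m * cos (2*pi*real m*t))"

lemma gauss_minus [simp]: "gauss x (- u) = gauss x u"
  by (simp add: gauss_def)

lemma gauss_antimono:
  assumes "x > 0" "\<bar>v\<bar> \<le> \<bar>u\<bar>"
  shows "gauss x u \<le> gauss x v"
proof -
  have "v^2 \<le> u^2" using assms(2) by (metis abs_le_square_iff)
  then show ?thesis using assms(1) by (simp add: gauss_def mult_left_mono)
qed

lemma gauss_periodization_term_bound:
  assumes x: "x > 0" and t: "t \<in> {0..1}"
  shows "\<bar>gauss x (t + real n) + gauss x (t - real n - 1)\<bar> \<le> 2 * exp (- (pi*x) * real n ^ 2)"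
proof -
  have "gauss x (t + real n) \<le> gauss x (real n)" "gauss x (t - real n - 1) \<le> gauss x (real n)"
    using t by (intro gauss_antimono[OF x]; auto)+
  moreover have "gauss x (t + real n) > 0" "gauss x (t - real n - 1) > 0"
    by (auto simp: gauss_def)
  ultimately have "\<bar>gauss x (t + real n) + gauss x (t - real n - 1)\<bar> \<le> 2 * gauss x (real n)"
    by linarith
  then show ?thesis by (simp add: gauss_def)
qed

lemma uniform_limit_gauss_periodization:
  assumes x: "x > 0" and c: "\<And>t. \<bar>c t\<bar> \<le> 1"
  shows "uniform_limit {0..1} (\<lambda>N t. \<Sum>n<N. (gauss x (t + real n) + gauss x (t - real n - 1)) * c t)
           (\<lambda>t. gauss_periodization x t * c t) sequentially"
proof -
  have majorant: "summable (\<lambda>n::nat. 2 * exp (- (pi*x) * real n ^ 2))"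
    using x by (intro summable_mult summable_gaussian) simp
  have bound: "\<bar>(gauss x (t + real n) + gauss x (t - real n - 1)) * c t\<bar>
      \<le> 2 * exp (- (pi*x) * real n ^ 2)" if "t \<in> {0..1}" for n t
    unfolding abs_mult
    using mult_mono[OF gauss_periodization_term_bound[OF x that] c] by simp
  have lim: "uniform_limit {0..1} (\<lambda>N t. \<Sum>n<N. (gauss x (t + real n) + gauss x (t - real n - 1)) * c t)
           (\<lambda>t. \<Sum>n. (gauss x (t + real n) + gauss x (t - real n - 1)) * c t) sequentially"
    using bound by (intro Weierstrass_m_test[OF _ majorant]) simp
  have "(\<Sum>n. (gauss x (t + real n) + gauss x (t - real n - 1)) * c t)
      = gauss_periodization x t * c t" if "t \<in> {0..1}" for t
  proof -
    have "summable (\<lambda>n. gauss x (t + real n) + gauss x (t - real n - 1))"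
      using gauss_periodization_term_bound[OF x that] by (intro summable_comparison_test[OF _ majorant]) auto
    then show ?thesis unfolding gauss_periodization_def by (rule suminf_mult2[symmetric])
  qed
  then show ?thesis by (intro uniform_limit_cong'[THEN iffD1, OF _ _ lim]) auto
qed

lemma cos_add_2pi_multiple: "cos (a + 2*pi*real k) = cos a"
  using cos_int_2pin[of "int k"] sin_int_2pin[of "int k"] by (simp add: cos_add mult_ac)

definition gauss_times_cos :: "real \<Rightarrow> nat \<Rightarrow> real \<Rightarrow> real" where
  "gauss_times_cos x m u = gauss x u * cos (2*pi*real m*u)"

lemma integrable_gauss_times_cos: "gauss_times_cos x m integrable_on {a..b}"
  unfolding gauss_times_cos_def gauss_def
  by (intro integrable_continuous_interval continuous_intros)

lemma gauss_periodization_term_cos_integral: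
  "((\<lambda>t. (gauss x (t + real n) + gauss x (t - real n - 1)) * cos (2*pi*real m*t)) has_integral
     integral {real n..real n + 1} (gauss_times_cos x m)
     + integral {- real n - 1..- real n} (gauss_times_cos x m)) {0..1}"
proof -
  have shift: "((\<lambda>t. gauss_times_cos x m (t + c)) has_integral integral {a..b} (gauss_times_cos x m))
      {a - c..b - c}" for a b c
    by (rule has_integral_shift_real_ivl[OF integrable_integral[OF integrable_gauss_times_cos]])
  have "cos (2*pi*real m*(t + real n)) = cos (2*pi*real m*t)"
      "cos (2*pi*real m*(t - real n - 1)) = cos (2*pi*real m*t)" for t
    using cos_add_2pi_multiple[of "2*pi*real m*t" "m*n"]
      cos_add_2pi_multiple[of "2*pi*real m*(t - real n - 1)" "m*(n+1)"]
    by (simp_all add: algebra_simps)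
  moreover have "((\<lambda>t. gauss_times_cos x m (t + real n) + gauss_times_cos x m (t + (- real n - 1)))
      has_integral integral {real n..real n + 1} (gauss_times_cos x m)
                   + integral {- real n - 1..- real n} (gauss_times_cos x m)) {0..1}"
    by (rule has_integral_add[OF shift[of "real n" "real n" "real n + 1", simplified]
        shift[of "- real n - 1" "- real n - 1" "- real n", simplified]])
  ultimately show ?thesis
    by (simp add: gauss_times_cos_def algebra_simps)
qed

lemma sum_gauss_periodization_term_cos_integrals:
  "(\<Sum>n<N. integral {real n..real n + 1} (gauss_times_cos x m)
           + integral {- real n - 1..- real n} (gauss_times_cos x m))
    = integral {- real N..real N} (gauss_times_cos x m)"
proof (induction N)
  case (Suc N)
  have "integral {- real N - 1..- real N} (gauss_times_cos x m) + integral {- real N..real N} (gauss_times_cos x m)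
        = integral {- real N - 1..real N} (gauss_times_cos x m)"
    "integral {- real N - 1..real N} (gauss_times_cos x m) + integral {real N..real N + 1} (gauss_times_cos x m)
        = integral {- real N - 1..real N + 1} (gauss_times_cos x m)"
    by (simp_all add: Henstock_Kurzweil_Integration.integral_combine integrable_gauss_times_cos)
  then have "(\<Sum>n<Suc N. integral {real n..real n + 1} (gauss_times_cos x m)
                  + integral {- real n - 1..- real n} (gauss_times_cos x m))
      = integral {- real N - 1..real N + 1} (gauss_times_cos x m)"
    by (simp only: sum.lessThan_Suc Suc.IH)
  also have "{- real N - 1..real N + 1} = {- real (Suc N)..real (Suc N)}" by simp
  finally show ?case .
qed simp

lemma integral_gauss_times_cos_tendsto:
  assumes x: "x > 0"
  shows "(\<lambda>N. integral {- real N..real N} (gauss_times_cos x m))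
           \<longlonglongrightarrow> exp (- pi * (real m)^2 / x) / sqrt x"
proof -
  have "exp (- ((2*pi*real m)^2) / (4*pi*x)) = exp (- pi * (real m)^2 / x)"
    using x by (simp add: power_mult_distrib power2_eq_square field_simps)
  then have int: "(gauss_times_cos x m has_integral exp (- pi * (real m)^2 / x) / sqrt x) UNIV"
    using has_integral_gaussian_cos[OF x, of "2*pi*real m"]
    unfolding gauss_times_cos_def gauss_def by (simp add: mult_ac)
  show ?thesis
  proof (rule LIMSEQ_I)
    fix e :: real assume e: "e > 0"
    obtain B where "B > 0" and B: "\<forall>a b. ball 0 B \<subseteq> cbox a b \<longrightarrow>
        (\<exists>z. ((\<lambda>u. if u \<in> UNIV then gauss_times_cos x m u else 0) has_integral z) (cbox a b) \<and>
             norm (z - exp (- pi * (real m)^2 / x) / sqrt x) < e)"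
      using has_integral_altD[OF int _ e] by auto
    obtain N0 :: nat where N0: "real N0 > B" using reals_Archimedean2 by blast
    have "norm (integral {- real N..real N} (gauss_times_cos x m) - exp (- pi * (real m)^2 / x) / sqrt x) < e"
      if "N \<ge> N0" for N
    proof -
      have "ball 0 B \<subseteq> cbox (- real N) (real N)"
        using that N0 by (auto simp: dist_real_def)
      then obtain z where z: "(gauss_times_cos x m has_integral z) {- real N..real N}"
        and "norm (z - exp (- pi * (real m)^2 / x) / sqrt x) < e"
        using B by (auto simp del: cbox_interval) blast
      then show ?thesis using integral_unique[OF z] by simp
    qed
    then show "\<exists>N0. \<forall>N\<ge>N0. norm (integral {- real N..real N} (gauss_times_cos x m)
                   - exp (- pi * (real m)^2 / x) / sqrt x) < e"
      by blast
  qed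
qed

lemma gauss_periodization_cos_coeff:
  assumes x: "x > 0"
  shows "((\<lambda>t. gauss_periodization x t * cos (2*pi*real m*t))
           has_integral exp (- pi * (real m)^2 / x) / sqrt x) {0..1}"
proof -
  have U: "uniform_limit {0..1}
      (\<lambda>N t. \<Sum>n<N. (gauss x (t + real n) + gauss x (t - real n - 1)) * cos (2*pi*real m*t))
      (\<lambda>t. gauss_periodization x t * cos (2*pi*real m*t)) sequentially"
    by (rule uniform_limit_gauss_periodization[OF x]) simp
  have C: "continuous_on {0..1}
      (\<lambda>t. \<Sum>n<N. (gauss x (t + real n) + gauss x (t - real n - 1)) * cos (2*pi*real m*t))" for N
    unfolding gauss_def by (intro continuous_intros)
  obtain I J where
    I: "\<And>N. ((\<lambda>t. \<Sum>n<N. (gauss x (t + real n) + gauss x (t - real n - 1)) * cos (2*pi*real m*t))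
               has_integral I N) {0..1}"
    and J: "((\<lambda>t. gauss_periodization x t * cos (2*pi*real m*t)) has_integral J) {0..1}"
    and IJ: "I \<longlonglongrightarrow> J"
    by (rule uniform_limit_integral[OF U C]) auto
  have "I N = integral {- real N..real N} (gauss_times_cos x m)" for N
    using has_integral_unique[OF I[of N] has_integral_sum[OF _ gauss_periodization_term_cos_integral]]
    by (simp add: sum_gauss_periodization_term_cos_integrals)
  then have "I = (\<lambda>N. integral {- real N..real N} (gauss_times_cos x m))" ..
  then have "I \<longlonglongrightarrow> exp (- pi * (real m)^2 / x) / sqrt x"
    using integral_gauss_times_cos_tendsto[OF x, of m] by simp
  then have "J = exp (- pi * (real m)^2 / x) / sqrt x"
    using IJ LIMSEQ_unique by blast
  then show ?thesis using J by simp
qed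

lemma has_integral_cos_int:
  "((\<lambda>t. cos (2*pi*real_of_int j*t)) has_integral (if j = 0 then 1 else 0)) {0..1}"
proof (cases "j = 0")
  case False
  then have nz: "2*pi*real_of_int j \<noteq> 0" by simp
  have "((\<lambda>t. cos (2*pi*real_of_int j*t)) has_integral
        sin (2*pi*real_of_int j*1) / (2*pi*real_of_int j) - sin (2*pi*real_of_int j*0) / (2*pi*real_of_int j))
        {0..1}"
  proof (rule fundamental_theorem_of_calculus)
    fix t :: real
    have "((\<lambda>t. sin (2*pi*real_of_int j*t) / (2*pi*real_of_int j)) has_real_derivative
          cos (2*pi*real_of_int j*t) * (2*pi*real_of_int j) / (2*pi*real_of_int j)) (at t within {0..1})"
      by (auto intro!: derivative_eq_intros)
    then show "((\<lambda>t. sin (2*pi*real_of_int j*t) / (2*pi*real_of_int j)) has_vector_derivative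
          cos (2*pi*real_of_int j*t)) (at t within {0..1})"
      using nz by (simp add: has_real_derivative_iff_has_vector_derivative)
  qed simp
  moreover have "sin (2*pi*real_of_int j) = 0"
    using sin_int_2pin[of j] by (simp add: mult_ac)
  ultimately show ?thesis using False by simp
qed (use has_integral_const_real[of "1::real" 0 1] in simp)

lemma has_integral_cos_cos_nat:
  "((\<lambda>t. cos (2*pi*real m*t) * cos (2*pi*real k*t)) has_integral
     (if m = k then (if k = 0 then 1 else 1/2) else 0)) {0..1}"
proof -
  have prod: "cos (2*pi*real m*t) * cos (2*pi*real k*t) =
     (cos (2*pi*real_of_int (int m + int k)*t) + cos (2*pi*real_of_int (int m - int k)*t)) / 2" for t
    by (simp add: cos_add cos_diff algebra_simps)
  have "((\<lambda>t. (cos (2*pi*real_of_int (int m + int k)*t)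
                        + cos (2*pi*real_of_int (int m - int k)*t)) / 2) has_integral
       ((if int m + int k = 0 then 1 else 0) + (if int m - int k = 0 then 1 else 0)) / 2) {0..1}"
    by (intro has_integral_divide has_integral_add has_integral_cos_int)
  then show ?thesis unfolding prod by (auto split: if_splits)
qed

lemma gauss_cos_coeff_bound:
  assumes "x > 0"
  shows "\<bar>gauss_cos_coeff x m\<bar> \<le> 2 / sqrt x * exp (- (pi / x) * real m ^ 2)"
proof -
  have "\<bar>gauss_cos_coeff x m\<bar> = (if m = 0 then 1 else 2) * (exp (- (pi / x) * real m ^ 2) / sqrt x)"
    using assms by (simp add: gauss_cos_coeff_def)
  also have "\<dots> \<le> 2 * (exp (- (pi / x) * real m ^ 2) / sqrt x)"
    by (intro mult_right_mono) (use assms in auto)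
  finally show ?thesis by simp
qed

lemma uniform_limit_gauss_cos_series:
  assumes x: "x > 0" and c: "\<And>t. \<bar>c t\<bar> \<le> 1"
  shows "uniform_limit UNIV (\<lambda>N t. \<Sum>m<N. gauss_cos_coeff x m * cos (2*pi*real m*t) * c t)
           (\<lambda>t. gauss_cos_series x t * c t) sequentially"
proof -
  have majorant: "summable (\<lambda>m::nat. 2 / sqrt x * exp (- (pi / x) * real m ^ 2))"
    using x by (intro summable_mult summable_gaussian) simp
  have bound: "\<bar>gauss_cos_coeff x m * cos y * d\<bar> \<le> 2 / sqrt x * exp (- (pi / x) * real m ^ 2)"
    if "\<bar>d\<bar> \<le> 1" for m y d
  proof -
    have "\<bar>cos y * d\<bar> \<le> 1"
      using abs_cos_le_one[of y] that by (simp add: abs_mult mult_le_one)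
    then have "\<bar>gauss_cos_coeff x m\<bar> * \<bar>cos y * d\<bar> \<le> \<bar>gauss_cos_coeff x m\<bar>"
      by (intro mult_left_le) auto
    then show ?thesis
      using gauss_cos_coeff_bound[OF x, of m] by (simp add: abs_mult mult.assoc)
  qed
  have lim: "uniform_limit UNIV (\<lambda>N t. \<Sum>m<N. gauss_cos_coeff x m * cos (2*pi*real m*t) * c t)
      (\<lambda>t. \<Sum>m. gauss_cos_coeff x m * cos (2*pi*real m*t) * c t) sequentially"
    using bound[OF c] by (intro Weierstrass_m_test[OF _ majorant]) simp
  have "(\<Sum>m. gauss_cos_coeff x m * cos (2*pi*real m*t) * c t) = gauss_cos_series x t * c t" for t
  proof -
    have "summable (\<lambda>m. gauss_cos_coeff x m * cos (2*pi*real m*t))"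
      using bound[of 1] by (intro summable_comparison_test[OF _ majorant]) simp
    then show ?thesis unfolding gauss_cos_series_def by (rule suminf_mult2[symmetric])
  qed
  then show ?thesis by (intro uniform_limit_cong'[THEN iffD1, OF _ _ lim]) auto
qed

lemma gauss_cos_series_cos_coeff:
  assumes x: "x > 0"
  shows "((\<lambda>t. gauss_cos_series x t * cos (2*pi*real k*t))
           has_integral exp (- pi * (real k)^2 / x) / sqrt x) {0..1}"
proof -
  have U: "uniform_limit {0..1}
      (\<lambda>N t. \<Sum>m<N. gauss_cos_coeff x m * cos (2*pi*real m*t) * cos (2*pi*real k*t))
      (\<lambda>t. gauss_cos_series x t * cos (2*pi*real k*t)) sequentially"
    by (rule uniform_limit_on_subset[OF uniform_limit_gauss_cos_series[OF x]]) auto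
  have C: "continuous_on {0..1}
      (\<lambda>t. \<Sum>m<N. gauss_cos_coeff x m * cos (2*pi*real m*t) * cos (2*pi*real k*t))" for N
    by (intro continuous_intros)
  obtain I J where
    I: "\<And>N. ((\<lambda>t. \<Sum>m<N. gauss_cos_coeff x m * cos (2*pi*real m*t) * cos (2*pi*real k*t))
               has_integral I N) {0..1}"
    and J: "((\<lambda>t. gauss_cos_series x t * cos (2*pi*real k*t)) has_integral J) {0..1}"
    and IJ: "I \<longlonglongrightarrow> J"
    by (rule uniform_limit_integral[OF U C]) auto
  have "I N = (\<Sum>m<N. gauss_cos_coeff x m * (if m = k then (if k = 0 then 1 else 1/2) else 0))" for N
  proof -
    have "((\<lambda>t. gauss_cos_coeff x m * cos (2*pi*real m*t) * cos (2*pi*real k*t)) has_integral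
        gauss_cos_coeff x m * (if m = k then (if k = 0 then 1 else 1/2) else 0)) {0..1}" for m
      using has_integral_mult_right[OF has_integral_cos_cos_nat] by (simp add: mult.assoc)
    then show ?thesis by (intro has_integral_unique[OF I[of N]] has_integral_sum) auto
  qed
  also have "\<dots> N = exp (- pi * (real k)^2 / x) / sqrt x" if "N > k" for N
  proof -
    have "(\<Sum>m<N. gauss_cos_coeff x m * (if m = k then (if k = 0 then 1 else 1/2) else 0))
        = (\<Sum>m\<in>{k}. gauss_cos_coeff x m * (if m = k then (if k = 0 then 1 else 1/2) else 0))"
      by (rule sum.mono_neutral_right) (use that in auto)
    then show ?thesis by (simp add: gauss_cos_coeff_def)
  qed
  finally have "eventually (\<lambda>N. I N = exp (- pi * (real k)^2 / x) / sqrt x) sequentially"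
    unfolding eventually_sequentially by (intro exI[of _ "Suc k"]) simp
  then have "I \<longlonglongrightarrow> exp (- pi * (real k)^2 / x) / sqrt x"
    by (rule tendsto_eventually)
  then show ?thesis
    using J IJ LIMSEQ_unique by blast
qed

inductive cos_poly :: "(real \<Rightarrow> real) \<Rightarrow> bool" where
  cos: "cos_poly (\<lambda>t. cos (2*pi*real k*t))"
| add: "cos_poly p \<Longrightarrow> cos_poly q \<Longrightarrow> cos_poly (\<lambda>t. p t + q t)"
| scale: "cos_poly p \<Longrightarrow> cos_poly (\<lambda>t. c * p t)"

lemma cos_poly_const: "cos_poly (\<lambda>t. c)"
  using cos_poly.scale[OF cos_poly.cos[of 0], of c] by simp

lemma cos_poly_cos_mult_cos: "cos_poly (\<lambda>t. cos (2*pi*real j*t) * cos (2*pi*real k*t))"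
proof -
  define d where "d = (if j \<ge> k then j - k else k - j)"
  have "cos (2*pi*real d*t) = cos (2*pi*real j*t - 2*pi*real k*t)" for t
    using cos_minus[of "2*pi*real j*t - 2*pi*real k*t"]
    by (cases "j \<ge> k") (simp_all add: d_def of_nat_diff algebra_simps)
  then have eq: "(\<lambda>t. cos (2*pi*real j*t) * cos (2*pi*real k*t)) =
        (\<lambda>t. 1/2 * cos (2*pi*real (j+k)*t) + 1/2 * cos (2*pi*real d*t))"
    by (simp add: fun_eq_iff cos_diff cos_add algebra_simps)
  show ?thesis unfolding eq by (intro cos_poly.intros)
qed

lemma cos_poly_mult:
  assumes "cos_poly p" "cos_poly q"
  shows "cos_poly (\<lambda>t. p t * q t)"
proof -
  have mult_cos: "cos_poly (\<lambda>t. p t * cos (2*pi*real k*t))" if "cos_poly p" for p k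
    using that
  proof (induction rule: cos_poly.induct)
    case (add p q) then show ?case using cos_poly.add[OF add.IH] by (simp add: algebra_simps)
  next
    case (scale p c) then show ?case using cos_poly.scale[OF scale.IH, of c] by (simp add: mult.assoc)
  qed (rule cos_poly_cos_mult_cos)
  from assms(2) show ?thesis
  proof (induction rule: cos_poly.induct)
    case (add q1 q2) then show ?case using cos_poly.add[OF add.IH] by (simp add: algebra_simps)
  next
    case (scale q c) then show ?case using cos_poly.scale[OF scale.IH, of c] by (simp add: algebra_simps)
  qed (rule mult_cos[OF assms(1)])
qed

lemma cos_poly_power: "cos_poly p \<Longrightarrow> cos_poly (\<lambda>t. p t ^ n)"
  by (induction n) (simp_all add: cos_poly_const cos_poly_mult)

lemma cos_poly_sum: "(\<And>k. k \<in> A \<Longrightarrow> cos_poly (f k)) \<Longrightarrow> cos_poly (\<lambda>t. \<Sum>k\<in>A. f k t)"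
  by (induction A rule: infinite_finite_induct) (simp_all add: cos_poly_const cos_poly.add)

lemma cos_poly_Bernstein_half_cos:
  "cos_poly (\<lambda>t. \<Sum>k\<le>n. a k * Bernstein n k ((1 + cos (2*pi*t)) / 2))"
proof -
  have "cos_poly (\<lambda>t. 1/2 + c * cos (2*pi*real (1::nat)*t))" for c
    by (intro cos_poly.intros cos_poly_const)
  from this[of "1/2"] this[of "-1/2"]
  have "cos_poly (\<lambda>t. (1 + cos (2*pi*t)) / 2)" "cos_poly (\<lambda>t. 1 - (1 + cos (2*pi*t)) / 2)"
    by (simp_all add: field_simps)
  then show ?thesis
    unfolding Bernstein_def by (intro cos_poly_sum cos_poly_mult cos_poly_power cos_poly_const)
qed

lemma has_integral_mult_cos_poly:
  assumes "\<And>k. ((\<lambda>t. D t * cos (2*pi*real k*t)) has_integral 0) {0..1}"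
  shows "cos_poly p \<Longrightarrow> ((\<lambda>t. D t * p t) has_integral 0) {0..1}"
proof (induction rule: cos_poly.induct)
  case (add p q) then show ?case using has_integral_add[OF add.IH] by (simp add: algebra_simps)
next
  case (scale p c)
  then show ?case using has_integral_mult_right[OF scale.IH, of c] by (simp add: algebra_simps)
qed (rule assms)

lemma arccos_cos_2pi_cases:
  assumes "t \<in> {0..1}"
  shows "arccos (cos (2*pi*t)) = 2*pi*t \<or> arccos (cos (2*pi*t)) = 2*pi*(1 - t)"
proof (cases "t \<le> 1/2")
  case True then show ?thesis using assms by (simp add: arccos_cos)
next
  case False
  have "cos (2*pi*(1 - t)) = cos (- (2*pi*t) + 2*pi)"
    by (simp add: algebra_simps)
  then have "cos (2*pi*t) = cos (2*pi*(1 - t))"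
    by simp
  then show ?thesis using False assms by (simp add: arccos_cos)
qed

text \<open>Under \<open>y = (1 + cos (2\<pi>t)) / 2\<close> a function on \<open>[0,1]\<close> symmetric about \<open>1/2\<close> becomes an
  arbitrary continuous function of \<open>y \<in> [0,1]\<close>, and polynomials in \<open>y\<close> are cosine polynomials in \<open>t\<close>.\<close>

lemma cos_poly_approx:
  fixes D :: "real \<Rightarrow> real"
  assumes cont: "continuous_on {0..1} D" and sym: "\<And>t. t \<in> {0..1} \<Longrightarrow> D (1 - t) = D t"
    and e: "e > 0"
  obtains p where "cos_poly p" "\<And>t. t \<in> {0..1} \<Longrightarrow> \<bar>D t - p t\<bar> < e"
proof -
  define f where "f y = D (arccos (2*y - 1) / (2*pi))" for y
  have "(\<lambda>y. arccos (2*y - 1) / (2*pi)) ` {0..1} \<subseteq> {0..1}"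
  proof (rule image_subsetI)
    fix y :: real assume "y \<in> {0..1}"
    then have "0 \<le> arccos (2*y - 1)" "arccos (2*y - 1) \<le> pi"
      using arccos_bounded[of "2*y - 1"] by auto
    then show "arccos (2*y - 1) / (2*pi) \<in> {0..1}"
      by (simp add: field_simps)
  qed
  then have "continuous_on {0..1} f"
    unfolding f_def by (intro continuous_on_compose2[OF cont] continuous_intros) auto
  then obtain N where N: "\<And>y. y \<in> {0..1} \<Longrightarrow> \<bar>f y - (\<Sum>k\<le>N. f (k/N) * Bernstein N k y)\<bar> < e"
    using Bernstein_Weierstrass[OF _ e] by blast
  have f_half_cos: "f ((1 + cos (2*pi*t)) / 2) = D t" if t: "t \<in> {0..1}" for t
  proof -
    have "2 * ((1 + cos (2*pi*t)) / 2) - 1 = cos (2*pi*t)"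
      by (simp add: field_simps)
    then have "f ((1 + cos (2*pi*t)) / 2) = D (arccos (cos (2*pi*t)) / (2*pi))"
      unfolding f_def by argo
    then show ?thesis using arccos_cos_2pi_cases[OF t] sym[OF t] by auto
  qed
  have "(1 + c) / 2 \<in> {0..1}" if "\<bar>c\<bar> \<le> 1" for c :: real
    using that by auto
  then have half_cos: "(1 + cos (2*pi*t)) / 2 \<in> {0..1}" for t
    by simp
  show ?thesis
  proof (rule that[OF cos_poly_Bernstein_half_cos])
    fix t :: real assume "t \<in> {0..1}"
    then show "\<bar>D t - (\<Sum>k\<le>N. f (k/N) * Bernstein N k ((1 + cos (2*pi*t)) / 2))\<bar> < e"
      using N[OF half_cos, of t] f_half_cos[of t] by simp
  qed
qed

lemma cos_orthogonal_imp_zero: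
  fixes D :: "real \<Rightarrow> real"
  assumes cont: "continuous_on {0..1} D" and sym: "\<And>t. t \<in> {0..1} \<Longrightarrow> D (1 - t) = D t"
    and orth: "\<And>k. ((\<lambda>t. D t * cos (2*pi*real k*t)) has_integral 0) {0..1}"
    and t: "t \<in> {0..1}"
  shows "D t = 0"
proof -
  obtain M where M: "M > 0" "\<And>s. s \<in> {0..1} \<Longrightarrow> \<bar>D s\<bar> \<le> M"
    using compact_imp_bounded[OF compact_continuous_image[OF cont]]
    by (force simp: bounded_pos)
  define I where "I = integral {0..1} (\<lambda>s. D s * D s)"
  have DD: "((\<lambda>s. D s * D s) has_integral I) {0..1}"
    unfolding I_def by (intro integrable_integral integrable_continuous_interval continuous_intros cont)
  have small: "\<bar>I\<bar> \<le> M * e" if e: "e > 0" for e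
  proof -
    obtain p where p: "cos_poly p" "\<And>s. s \<in> {0..1} \<Longrightarrow> \<bar>D s - p s\<bar> < e"
      using cos_poly_approx[OF cont sym e] by blast
    have "((\<lambda>s. D s * (D s - p s)) has_integral I) {0..1}"
      using has_integral_diff[OF DD has_integral_mult_cos_poly[OF orth p(1)]]
      by (simp add: algebra_simps)
    moreover have "\<bar>D s * (D s - p s)\<bar> \<le> M * e" if "s \<in> {0..1}" for s
      unfolding abs_mult using M(2)[OF that] p(2)[OF that] by (intro mult_mono) auto
    ultimately have "norm I \<le> (M * e) * Henstock_Kurzweil_Integration.content {0..1::real}"
      using M e by (intro has_integral_bound_real[OF _ finite.emptyI]) auto
    then show ?thesis by simp
  qed
  have "I = 0"
  proof (rule ccontr)
    assume "I \<noteq> 0"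
    then show False using small[of "\<bar>I\<bar> / (2 * M)"] M by (simp add: field_simps)
  qed
  then have "D t * D t = 0"
    using DD t by (intro has_integral_0_cbox_imp_0[of 0 1 "\<lambda>s. D s * D s"])
      (auto intro!: continuous_intros cont)
  then show ?thesis by simp
qed

lemma continuous_on_gauss_periodization:
  assumes x: "x > 0"
  shows "continuous_on {0..1} (gauss_periodization x)"
proof -
  have "uniform_limit {0..1} (\<lambda>N t. \<Sum>n<N. gauss x (t + real n) + gauss x (t - real n - 1))
      (gauss_periodization x) sequentially"
    using uniform_limit_gauss_periodization[OF x, of "\<lambda>_. 1"] by simp
  then show ?thesis
    by (rule uniform_limit_theorem[rotated]) (auto simp: gauss_def intro!: always_eventually continuous_intros)
qed

lemma continuous_on_gauss_cos_series:
  assumes x: "x > 0"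
  shows "continuous_on {0..1} (gauss_cos_series x)"
proof -
  have "uniform_limit {0..1} (\<lambda>N t. \<Sum>m<N. gauss_cos_coeff x m * cos (2*pi*real m*t))
      (gauss_cos_series x) sequentially"
    using uniform_limit_on_subset[OF uniform_limit_gauss_cos_series[OF x, of "\<lambda>_. 1"]] by simp
  then show ?thesis
    by (rule uniform_limit_theorem[rotated]) (auto intro!: always_eventually continuous_intros)
qed

lemma gauss_periodization_reflect: "gauss_periodization x (1 - t) = gauss_periodization x t"
proof -
  have "gauss x (1 - t + real n) = gauss x (t - real n - 1)"
       "gauss x (1 - t - real n - 1) = gauss x (t + real n)" for n
    using gauss_minus[of x "t - real n - 1"] gauss_minus[of x "t + real n"]
    by (simp_all add: algebra_simps)
  then show ?thesis unfolding gauss_periodization_def by (simp add: add.commute)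
qed

lemma gauss_cos_series_reflect: "gauss_cos_series x (1 - t) = gauss_cos_series x t"
proof -
  have "cos (2*pi*real m*(1 - t)) = cos (2*pi*real m*t)" for m
    using cos_add_2pi_multiple[of "- (2*pi*real m*t)" m] by (simp add: algebra_simps)
  then show ?thesis unfolding gauss_cos_series_def by simp
qed

theorem poisson_summation_gauss:
  assumes "x > 0" "t \<in> {0..1}"
  shows "gauss_periodization x t = gauss_cos_series x t"
proof -
  have "gauss_periodization x t - gauss_cos_series x t = 0"
  proof (rule cos_orthogonal_imp_zero[where D = "\<lambda>s. gauss_periodization x s - gauss_cos_series x s"])
    show "continuous_on {0..1} (\<lambda>s. gauss_periodization x s - gauss_cos_series x s)"
      using assms by (intro continuous_intros continuous_on_gauss_periodization continuous_on_gauss_cos_series)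
    show "((\<lambda>t. (gauss_periodization x t - gauss_cos_series x t) * cos (2*pi*real k*t)) has_integral 0) {0..1}"
      for k
      using has_integral_diff[OF gauss_periodization_cos_coeff[OF assms(1), of k]
          gauss_cos_series_cos_coeff[OF assms(1), of k]]
      by (simp add: algebra_simps)
  qed (use assms in \<open>simp_all add: gauss_periodization_reflect gauss_cos_series_reflect\<close>)
  then show ?thesis by simp
qed

section \<open>Theta functions as series over the naturals\<close>

definition theta_exponent :: "real \<Rightarrow> nat \<Rightarrow> real" where
  "theta_exponent a n = pi * (real n + a)^2"

definition theta_series :: "(nat \<Rightarrow> real) \<Rightarrow> real \<Rightarrow> nat \<Rightarrow> real \<Rightarrow> real" where
  "theta_series c a k y = (\<Sum>n. c n * theta_exponent a n ^ k * exp (- theta_exponent a n * y))"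

definition theta3_coeff :: "nat \<Rightarrow> real" where
  "theta3_coeff n = (if n = 0 then 1 else 2)"

definition theta4_coeff :: "nat \<Rightarrow> real" where
  "theta4_coeff n = (if n = 0 then 1 else 2) * (-1)^n"

text \<open>\<open>\<theta>\<^sub>2(y) = \<Sum>\<^sub>k\<^sub>\<in>\<^sub>\<int> exp (-\<pi> (k + 1/2)\<^sup>2 y)\<close>; the terms for \<open>k\<close> and \<open>-k-1\<close> coincide.\<close>

definition theta2 :: "real \<Rightarrow> real" where
  "theta2 y = theta_series (\<lambda>_. 2) (1/2) 0 y"

lemma theta_exponent_nonneg: "theta_exponent a n \<ge> 0"
  by (simp add: theta_exponent_def)

lemma summable_theta_exponent_power:
  assumes "y > 0" "a \<ge> 0"
  shows "summable (\<lambda>n. theta_exponent a n ^ k * exp (- theta_exponent a n * y))"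
proof (rule summable_comparison_test_bigo)
  show "summable (\<lambda>n::nat. norm (1 / real n ^ 2))"
    using inverse_power_summable[of 2] by (simp add: divide_inverse)
  show "(\<lambda>n. theta_exponent a n ^ k * exp (- theta_exponent a n * y)) \<in> O(\<lambda>n. 1 / real n ^ 2)"
    using assms unfolding theta_exponent_def by real_asymp
qed

lemma summable_theta_series:
  assumes "y > 0" "a \<ge> 0" and c: "\<And>n. \<bar>c n\<bar> \<le> 2"
  shows "summable (\<lambda>n. c n * theta_exponent a n ^ k * exp (- theta_exponent a n * y))"
proof (rule summable_comparison_test[OF _ summable_mult[OF summable_theta_exponent_power[OF assms(1,2)], of 2]])
  have "\<bar>c n\<bar> * (theta_exponent a n ^ k * exp (- theta_exponent a n * y))
      \<le> 2 * (theta_exponent a n ^ k * exp (- theta_exponent a n * y))" for n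
    by (intro mult_right_mono c) (simp add: theta_exponent_nonneg)
  then show "\<exists>N. \<forall>n\<ge>N. norm (c n * theta_exponent a n ^ k * exp (- theta_exponent a n * y))
      \<le> 2 * (theta_exponent a n ^ k * exp (- theta_exponent a n * y))"
    by (simp add: abs_mult theta_exponent_nonneg mult.assoc)
qed

lemma suminf_add_Suc_eq:
  fixes f :: "nat \<Rightarrow> real"
  assumes "summable f"
  shows "(\<Sum>n. f n + f (Suc n)) = (\<Sum>n. (if n = 0 then 1 else 2) * f n)"
proof -
  have Suc: "summable (\<lambda>n. f (Suc n))" using assms by (simp add: summable_Suc_iff)
  have head: "summable (\<lambda>n::nat. if n = 0 then f 0 else 0)"
    by (rule summable_finite[of "{0}"]) auto
  have "(\<Sum>n. (if n = 0 then 1 else 2) * f n) = (\<Sum>n. 2 * f n - (if n = 0 then f 0 else 0))"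
    by (intro suminf_cong) auto
  also have "\<dots> = 2 * (\<Sum>n. f n) - f 0"
    using suminf_diff[OF summable_mult[OF assms, of 2] head] suminf_mult[OF assms, of 2]
      suminf_finite[of "{0}" "\<lambda>n. if n = 0 then f 0 else 0"] by simp
  also have "\<dots> = (\<Sum>n. f n) + (\<Sum>n. f (Suc n))"
    using suminf_split_head[OF assms] by simp
  finally show ?thesis using suminf_add[OF assms Suc] by simp
qed

lemma infsum_even_int:
  fixes f :: "int \<Rightarrow> real"
  assumes even: "\<And>k. f (- k) = f k" and summable: "summable (\<lambda>n::nat. \<bar>f (int n)\<bar>)"
  shows "infsum f UNIV = (\<Sum>n. (if n = 0 then 1 else 2) * f (int n))"
proof -
  have s0: "summable (\<lambda>n::nat. f (int n))" by (rule summable_rabs_cancel[OF summable])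
  have s1: "summable (\<lambda>n::nat. f (int (Suc n)))"
    using s0 unfolding summable_Suc_iff[of "\<lambda>n. f (int n)", symmetric] .
  have "summable (\<lambda>n::nat. norm (f (int (Suc n))))"
    using summable unfolding real_norm_def summable_Suc_iff[of "\<lambda>n. \<bar>f (int n)\<bar>", symmetric] .
  then have "((\<lambda>n. f (int (Suc n))) has_sum (\<Sum>n. f (int (Suc n)))) UNIV"
    by (rule norm_summable_imp_has_sum[OF _ summable_sums[OF s1]])
  moreover have "f \<circ> (\<lambda>n. - int (Suc n)) = (\<lambda>n. f (int (Suc n)))"
    by (rule ext) (simp only: o_def even)
  ultimately have neg: "(f has_sum (\<Sum>n. f (int (Suc n)))) (range (\<lambda>n. - int (Suc n)))"
    using has_sum_reindex[of "\<lambda>n::nat. - int (Suc n)" UNIV f] by (simp add: inj_on_def)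
  have "((\<lambda>n. f (int n)) has_sum (\<Sum>n. f (int n))) UNIV"
    by (rule norm_summable_imp_has_sum[OF _ summable_sums[OF s0]]) (simp add: summable)
  then have nonneg: "(f has_sum (\<Sum>n. f (int n))) (range int)"
    using has_sum_reindex[of int UNIV f] by (simp add: o_def)
  have "range int \<union> range (\<lambda>n. - int (Suc n)) = UNIV"
  proof -
    have "k \<in> range int \<or> k \<in> range (\<lambda>n. - int (Suc n))" for k :: int
      using image_eqI[of k int "nat k"] image_eqI[of k "\<lambda>n. - int (Suc n)" "nat (- k - 1)"]
      by (cases "k \<ge> 0") auto
    then show ?thesis by blast
  qed
  then have "(f has_sum (\<Sum>n. f (int n)) + (\<Sum>n. f (int (Suc n)))) UNIV"
    using has_sum_Un_disjoint[OF nonneg neg] by force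
  then have "infsum f UNIV = (\<Sum>n. f (int n) + f (int (Suc n)))"
    using suminf_add[OF s0 s1] by (simp add: infsumI)
  also have "\<dots> = (\<Sum>n. (if n = 0 then 1 else 2) * f (int n))"
    using suminf_add_Suc_eq[OF s0] by simp
  finally show ?thesis .
qed

lemma theta3_eq_theta_series:
  assumes "x > 0"
  shows "theta3 x = theta_series theta3_coeff 0 0 x"
proof -
  have "theta3 x = (\<Sum>n. (if n = 0 then 1 else 2) * exp (- pi * (real_of_int (int n))^2 * x))"
    unfolding theta3_def
  proof (rule infsum_even_int)
    show "summable (\<lambda>n::nat. \<bar>exp (- pi * (real_of_int (int n))^2 * x)\<bar>)"
      using summable_gaussian[of "pi*x"] assms by (simp add: mult_ac)
  qed simp
  then show ?thesis
    by (simp add: theta_series_def theta3_coeff_def theta_exponent_def)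
qed

lemma theta4_eq_theta_series:
  assumes "x > 0"
  shows "theta4 x = theta_series theta4_coeff 0 0 x"
proof -
  have "theta4 x = (\<Sum>n. (if n = 0 then 1 else 2)
                     * ((-1) powi (int n) * exp (- pi * (real_of_int (int n))^2 * x)))"
    unfolding theta4_def
  proof (rule infsum_even_int)
    show "summable (\<lambda>n::nat. \<bar>(-1) powi (int n) * exp (- pi * (real_of_int (int n))^2 * x)\<bar>)"
      using summable_gaussian[of "pi*x"] assms by (simp add: mult_ac abs_mult power_int_def)
    have "inverse ((-1::real) powi k) = (-1) powi k" for k
      by (rule inverse_unique) simp
    then show "(-1) powi (- k) * exp (- pi * (real_of_int (- k))^2 * x)
        = (-1) powi k * exp (- pi * (real_of_int k)^2 * x)" for k :: int
      by (simp add: power_int_minus)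
  qed
  then show ?thesis
    by (simp add: theta_series_def theta4_coeff_def theta_exponent_def mult_ac)
qed

lemma gauss_periodization_zero:
  assumes "x > 0"
  shows "gauss_periodization x 0 = theta_series theta3_coeff 0 0 x"
proof -
  have "gauss_periodization x 0
      = (\<Sum>n. exp (- pi * (real n)^2 * x) + exp (- pi * (real (Suc n))^2 * x))"
    unfolding gauss_periodization_def gauss_def by (intro suminf_cong) (simp add: power2_eq_square algebra_simps)
  also have "\<dots> = theta_series theta3_coeff 0 0 x"
    using summable_gaussian[of "pi*x"] assms suminf_add_Suc_eq[of "\<lambda>n. exp (- pi * (real n)^2 * x)"]
    by (simp add: theta_series_def theta3_coeff_def theta_exponent_def mult_ac)
  finally show ?thesis .
qed

lemma gauss_periodization_half: "gauss_periodization x (1/2) = theta2 x"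
proof -
  have "gauss x (1/2 - real n - 1) = gauss x (1/2 + real n)" for n
    using gauss_minus[of x "1/2 + real n"] by (simp add: algebra_simps)
  then show ?thesis
    unfolding gauss_periodization_def theta2_def theta_series_def theta_exponent_def gauss_def
    by (intro suminf_cong) (simp add: algebra_simps)
qed

lemma gauss_cos_series_eq_theta_series:
  assumes "x > 0" and "\<And>m. cos (2*pi*real m*t) * theta3_coeff m = c m" and "\<And>m. \<bar>c m\<bar> \<le> 2"
  shows "gauss_cos_series x t = theta_series c 0 0 (1/x) / sqrt x"
proof -
  have "gauss_cos_series x t = (\<Sum>m. c m * theta_exponent 0 m ^ 0 * exp (- theta_exponent 0 m * (1/x)) * (1 / sqrt x))"
    unfolding gauss_cos_series_def gauss_cos_coeff_def theta_exponent_def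
    using assms(2)[symmetric] by (intro suminf_cong) (simp add: theta3_coeff_def)
  also have "\<dots> = theta_series c 0 0 (1/x) * (1 / sqrt x)"
    unfolding theta_series_def
    by (rule suminf_mult2[symmetric], rule summable_theta_series) (use assms in auto)
  finally show ?thesis by simp
qed

theorem jacobi_theta3:
  assumes "x > 0"
  shows "theta3 (1/x) = sqrt x * theta3 x"
proof -
  have "gauss_cos_series x 0 = theta_series theta3_coeff 0 0 (1/x) / sqrt x"
    using assms by (intro gauss_cos_series_eq_theta_series) (auto simp: theta3_coeff_def)
  then show ?thesis
    using poisson_summation_gauss[OF assms, of 0] gauss_periodization_zero[OF assms] assms
    by (simp add: theta3_eq_theta_series field_simps)
qed

theorem jacobi_theta4:
  assumes "x > 0"
  shows "theta4 (1/x) = sqrt x * theta2 x"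
proof -
  have "cos (2*pi*real m*(1/2)) = (-1)^m" for m
    by (simp add: mult.commute)
  then have "gauss_cos_series x (1/2) = theta_series theta4_coeff 0 0 (1/x) / sqrt x"
    using assms by (intro gauss_cos_series_eq_theta_series)
      (auto simp: theta3_coeff_def theta4_coeff_def abs_mult)
  then show ?thesis
    using poisson_summation_gauss[OF assms, of "1/2"] gauss_periodization_half assms
    by (simp add: theta4_eq_theta_series field_simps)
qed

section \<open>Logarithmic derivatives of theta series\<close>

lemma theta_series_has_real_derivative:
  assumes y: "y > 0" and a: "a \<ge> 0" and c: "\<And>n. \<bar>c n\<bar> \<le> 2"
  shows "(theta_series c a k has_real_derivative theta_series (\<lambda>n. - c n) a (Suc k) y) (at y)"
proof -
  define S where "S = {y/2<..}"
  have deriv: "((\<lambda>z. c n * theta_exponent a n ^ k * exp (- theta_exponent a n * z)) has_field_derivative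
        - c n * theta_exponent a n ^ Suc k * exp (- theta_exponent a n * z)) (at z within S)" for n z
    by (auto intro!: derivative_eq_intros simp: algebra_simps)
  have "summable (\<lambda>n. 2 * (theta_exponent a n ^ Suc k * exp (- theta_exponent a n * (y/2))))"
    using y a by (intro summable_mult summable_theta_exponent_power) auto
  then have unif: "uniformly_convergent_on S
      (\<lambda>N z. \<Sum>n<N. - c n * theta_exponent a n ^ Suc k * exp (- theta_exponent a n * z))"
  proof (rule Weierstrass_m_test'[rotated])
    fix n z assume "z \<in> S"
    then have "exp (- theta_exponent a n * z) \<le> exp (- theta_exponent a n * (y/2))"
      using mult_left_mono[OF _ theta_exponent_nonneg, of "y/2" z] by (simp add: S_def)
    then have "\<bar>c n\<bar> * (theta_exponent a n ^ Suc k * exp (- theta_exponent a n * z))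
        \<le> 2 * (theta_exponent a n ^ Suc k * exp (- theta_exponent a n * (y/2)))"
      by (intro mult_mono c mult_left_mono) (auto simp: theta_exponent_nonneg)
    then show "norm (- c n * theta_exponent a n ^ Suc k * exp (- theta_exponent a n * z))
        \<le> 2 * (theta_exponent a n ^ Suc k * exp (- theta_exponent a n * (y/2)))"
      by (simp add: abs_mult theta_exponent_nonneg mult.assoc)
  qed
  have "y \<in> interior S"
    using y by (simp add: S_def interior_open)
  then have "((\<lambda>z. \<Sum>n. c n * theta_exponent a n ^ k * exp (- theta_exponent a n * z)) has_field_derivative
         (\<Sum>n. - c n * theta_exponent a n ^ Suc k * exp (- theta_exponent a n * y))) (at y)"
    using y by (intro has_field_derivative_series'(2)[OF _ deriv unif _ summable_theta_series[OF y a c]])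
      (auto simp: S_def)
  then show ?thesis unfolding theta_series_def[abs_def] by simp
qed

lemma theta_series_pos:
  assumes "y > 0" "a \<ge> 0" "\<And>n. c n > 0" "\<And>n. c n \<le> 2"
  shows "theta_series c a 0 y > 0"
  unfolding theta_series_def
  using assms by (intro suminf_pos summable_theta_series) (auto simp: abs_of_pos)

lemma theta3_series_pos: "y > 0 \<Longrightarrow> theta_series theta3_coeff 0 0 y > 0"
  by (rule theta_series_pos) (auto simp: theta3_coeff_def)

lemma theta2_pos: "y > 0 \<Longrightarrow> theta2 y > 0"
  unfolding theta2_def by (rule theta_series_pos) auto

lemma theta4_series_pos:
  assumes "y > 0"
  shows "theta_series theta4_coeff 0 0 y > 0"
  using jacobi_theta4[of "1/y"] theta2_pos[of "1/y"] assms by (simp add: theta4_eq_theta_series)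

definition log_theta :: "(nat \<Rightarrow> real) \<Rightarrow> real \<Rightarrow> real \<Rightarrow> real" where
  "log_theta c a u = ln (theta_series c a 0 (exp u))"

definition log_theta_deriv :: "(nat \<Rightarrow> real) \<Rightarrow> real \<Rightarrow> real \<Rightarrow> real" where
  "log_theta_deriv c a u = exp u * theta_series (\<lambda>n. - c n) a 1 (exp u) / theta_series c a 0 (exp u)"

definition log_theta_curvature :: "(nat \<Rightarrow> real) \<Rightarrow> real \<Rightarrow> real \<Rightarrow> real" where
  "log_theta_curvature c a x =
     (x * theta_series (\<lambda>n. - c n) a 1 x + x^2 * theta_series c a 2 x) * theta_series c a 0 x
     - (x * theta_series (\<lambda>n. - c n) a 1 x)^2"

lemma theta_series_exp_has_real_derivative:
  assumes "a \<ge> 0" "\<And>n. \<bar>c n\<bar> \<le> 2"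
  shows "((\<lambda>u. theta_series c a k (exp u)) has_real_derivative
           theta_series (\<lambda>n. - c n) a (Suc k) (exp u) * exp u) (at u)"
  using DERIV_chain2[OF theta_series_has_real_derivative[OF exp_gt_zero assms] DERIV_exp] .

lemma has_real_derivative_log_theta:
  assumes a: "a \<ge> 0" and c: "\<And>n. \<bar>c n\<bar> \<le> 2" and pos: "theta_series c a 0 (exp u) > 0"
  shows "(log_theta c a has_real_derivative log_theta_deriv c a u) (at u)"
proof -
  have "((\<lambda>u. ln (theta_series c a 0 (exp u))) has_real_derivative
          (1 / theta_series c a 0 (exp u)) * (theta_series (\<lambda>n. - c n) a (Suc 0) (exp u) * exp u)) (at u)"
    by (rule DERIV_chain2[OF DERIV_ln_divide[OF pos] theta_series_exp_has_real_derivative[OF a c]])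
  then show ?thesis unfolding log_theta_def[abs_def] log_theta_deriv_def by (simp add: field_simps)
qed

lemma has_real_derivative_log_theta_deriv:
  assumes a: "a \<ge> 0" and c: "\<And>n. \<bar>c n\<bar> \<le> 2" and pos: "theta_series c a 0 (exp u) > 0"
  shows "(log_theta_deriv c a has_real_derivative
           log_theta_curvature c a (exp u) / (theta_series c a 0 (exp u))^2) (at u)"
proof -
  have d1: "((\<lambda>u. theta_series (\<lambda>n. - c n) a 1 (exp u)) has_real_derivative
      theta_series c a 2 (exp u) * exp u) (at u)"
    using theta_series_exp_has_real_derivative[OF a, of "\<lambda>n. - c n" 1] c by (simp add: numeral_2_eq_2)
  have "theta_series c a 0 (exp u) \<noteq> 0" using pos by simp
  from DERIV_divide[OF DERIV_mult[OF DERIV_exp d1] theta_series_exp_has_real_derivative[OF a c] this]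
  show ?thesis unfolding log_theta_deriv_def[abs_def]
    by (rule DERIV_cong) (simp add: log_theta_curvature_def power2_eq_square algebra_simps)
qed

lemma log_theta_deriv_sign_mono:
  assumes a: "a \<ge> 0" and c: "\<And>n. \<bar>c n\<bar> \<le> 2" and pos: "\<And>x. x > 0 \<Longrightarrow> theta_series c a 0 x > 0"
    and curv: "\<And>x. exp u0 \<le> x \<Longrightarrow> \<sigma> * log_theta_curvature c a x > 0"
    and "u0 \<le> u" "u < v"
  shows "\<sigma> * log_theta_deriv c a u < \<sigma> * log_theta_deriv c a v"
proof (rule DERIV_pos_imp_increasing_open[OF \<open>u < v\<close>])
  fix w assume "u < w" "w < v"
  then have "\<sigma> * (log_theta_curvature c a (exp w) / (theta_series c a 0 (exp w))^2) > 0"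
    using curv[of "exp w"] pos[of "exp w"] \<open>u0 \<le> u\<close> by simp
  then show "\<exists>y. ((\<lambda>w. \<sigma> * log_theta_deriv c a w) has_real_derivative y) (at w) \<and> 0 < y"
    using DERIV_cmult[OF has_real_derivative_log_theta_deriv[OF a c pos[OF exp_gt_zero]]] by blast
next
  show "continuous_on {u..v} (\<lambda>w. \<sigma> * log_theta_deriv c a w)"
    using has_real_derivative_log_theta_deriv[OF a c pos[OF exp_gt_zero]]
    by (intro continuous_at_imp_continuous_on ballI continuous_intros DERIV_isCont) blast
qed

definition theta_moment :: "(nat \<Rightarrow> real) \<Rightarrow> real \<Rightarrow> nat \<Rightarrow> real \<Rightarrow> real" where
  "theta_moment c a k x = (\<Sum>n. c n * (theta_exponent a n * x)^k * exp (- theta_exponent a n * x))"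

lemma theta_moment_sums:
  assumes "x > 0" "a \<ge> 0" "\<And>n. \<bar>c n\<bar> \<le> 2"
  shows "(\<lambda>n. c n * (theta_exponent a n * x)^k * exp (- theta_exponent a n * x)) sums theta_moment c a k x"
    and "theta_moment c a k x = x^k * theta_series c a k x"
proof -
  have "(\<lambda>n. x^k * (c n * theta_exponent a n ^ k * exp (- theta_exponent a n * x)))
      sums (x^k * theta_series c a k x)"
    unfolding theta_series_def using summable_theta_series[OF assms] by (intro sums_mult summable_sums)
  then have "(\<lambda>n. c n * (theta_exponent a n * x)^k * exp (- theta_exponent a n * x))
      sums (x^k * theta_series c a k x)"
    by (simp add: power_mult_distrib mult_ac)
  then show "theta_moment c a k x = x^k * theta_series c a k x"
    and "(\<lambda>n. c n * (theta_exponent a n * x)^k * exp (- theta_exponent a n * x)) sums theta_moment c a k x"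
    by (simp_all add: theta_moment_def sums_iff)
qed

lemma log_theta_curvature_eq:
  assumes x: "x > 0" and a: "a \<ge> 0" and c: "\<And>n. \<bar>c n\<bar> \<le> 2"
  shows "log_theta_curvature c a x
           = (theta_moment c a 2 x - theta_moment c a 1 x) * theta_moment c a 0 x - (theta_moment c a 1 x)^2"
proof -
  have "theta_series (\<lambda>n. - c n) a 1 x = - theta_series c a 1 x"
    unfolding theta_series_def using suminf_minus[OF summable_theta_series[of x a c 1, OF x a c]]
    by simp
  moreover have "theta_moment c a k x = x^k * theta_series c a k x" for k
    using theta_moment_sums(2)[of x a c k, OF x a c] .
  ultimately show ?thesis
    by (simp add: log_theta_curvature_def power2_eq_square algebra_simps)
qed

section \<open>Sign of the curvature\<close>

lemma geometric_bound_summable: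
  fixes f :: "nat \<Rightarrow> real"
  assumes "\<And>n. 0 \<le> f n" "f 0 = 0" "0 < r" "r < 1" "\<And>n. f (Suc n) \<le> C * r ^ Suc n"
  shows "summable f" "suminf f \<le> C * r / (1 - r)"
proof -
  have geom: "summable (\<lambda>n. C * r * r ^ n)"
    using assms(3,4) by (intro summable_mult summable_geometric) simp
  have "summable (\<lambda>n. f (Suc n))"
    using assms(1,5) by (intro summable_comparison_test[OF _ geom]) (simp add: mult.assoc)
  then show summable: "summable f"
    by (simp add: summable_Suc_iff)
  have "suminf f = (\<Sum>n. f (Suc n))"
    using suminf_split_head[OF summable] assms(2) by simp
  also have "\<dots> \<le> (\<Sum>n. C * r * r ^ n)"
    using assms(5) \<open>summable (\<lambda>n. f (Suc n))\<close> geom by (intro suminf_le) (simp_all add: mult.assoc)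
  also have "\<dots> = C * r / (1 - r)"
    using suminf_mult[of "\<lambda>n. r^n" "C * r"] suminf_geometric[of r] assms(3,4) by simp
  finally show "suminf f \<le> C * r / (1 - r)" .
qed

lemma mult_exp_neg_le_exp_neg_half:
  fixes t :: real
  assumes "t \<ge> 0"
  shows "t * exp (- t) \<le> 2 * exp (- t / 2)" "t^2 * exp (- t) \<le> 8 * exp (- t / 2)"
proof -
  have "1 + t/2 + t^2 / 8 \<le> exp (t/2)"
    using exp_lower_Taylor_quadratic[of "t/2"] assms by (simp add: power_divide)
  then have "t \<le> 2 * exp (t/2)" "t^2 \<le> 8 * exp (t/2)"
    using assms zero_le_power2[of t] by linarith+
  then have "t * exp (- t) \<le> 2 * exp (t/2) * exp (- t)" "t^2 * exp (- t) \<le> 8 * exp (t/2) * exp (- t)"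
    by (intro mult_right_mono; simp)+
  moreover have "exp (t/2) * exp (- t) = exp (- t / 2)"
    by (simp flip: exp_add)
  ultimately show "t * exp (- t) \<le> 2 * exp (- t / 2)" "t^2 * exp (- t) \<le> 8 * exp (- t / 2)"
    by (simp_all add: mult.assoc)
qed

lemma exp_neg_le_inverse_Taylor_quadratic:
  fixes c :: real
  assumes "c \<ge> 0"
  shows "exp (- c) \<le> 1 / (1 + c + c^2 / 2)"
  using exp_lower_Taylor_quadratic[OF assms] assms
  by (simp add: exp_minus inverse_eq_divide frac_le add_pos_nonneg)

lemma exp_neg_half_le_power:
  fixes c t :: real
  assumes "2 * c * real m \<le> t"
  shows "exp (- t / 2) \<le> exp (- c) ^ m"
proof -
  have "exp (- c) ^ m = exp (real m * (- c))"
    by (rule exp_of_nat_mult[symmetric])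
  then show ?thesis
    using assms by (simp add: algebra_simps)
qed

lemma theta3_coeff_bound: "\<bar>theta3_coeff n\<bar> \<le> 2"
  by (simp add: theta3_coeff_def)

lemma theta3_moment_sums:
  assumes "x > 0"
  shows "(\<lambda>n. theta3_coeff n * (pi * (real n)^2 * x)^k * exp (- (pi * (real n)^2 * x)))
           sums theta_moment theta3_coeff 0 k x"
  using theta_moment_sums(1)[of x 0 theta3_coeff k] assms theta3_coeff_bound
  by (simp add: theta_exponent_def)

lemma theta3_moment1_lt:
  assumes x: "x \<ge> 1"
  shows "theta_moment theta3_coeff 0 1 x < 2"
proof -
  define r :: real where "r = exp (- (3/2))"
  have r: "0 < r" "r \<le> 8/29"
    using exp_neg_le_inverse_Taylor_quadratic[of "3/2"] by (simp_all add: r_def power_divide)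
  define f where "f = (\<lambda>n. theta3_coeff n * (pi * (real n)^2 * x) * exp (- (pi * (real n)^2 * x)))"
  have "f (Suc n) \<le> 4 * r ^ Suc n" for n
  proof -
    define m where "m = real (Suc n)"
    define t where "t = pi * m^2 * x"
    have "1 \<le> m" by (simp add: m_def)
    have "3 * m \<le> pi * m" using pi_gt3 \<open>1 \<le> m\<close> by simp
    also have "\<dots> \<le> pi * m^2" using \<open>1 \<le> m\<close> by (simp add: power2_eq_square)
    also have "\<dots> \<le> t" using mult_left_mono[of 1 x "pi * m^2"] x by (simp add: t_def)
    finally have "exp (- t / 2) \<le> r ^ Suc n"
      unfolding r_def m_def by (intro exp_neg_half_le_power) simp
    moreover have "t * exp (- t) \<le> 2 * exp (- t / 2)"
      using mult_exp_neg_le_exp_neg_half(1)[of t] x by (simp add: t_def)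
    moreover have "f (Suc n) = 2 * (t * exp (- t))"
      by (simp add: f_def t_def m_def theta3_coeff_def)
    ultimately show ?thesis
      by simp
  qed
  then have "suminf f \<le> 4 * r / (1 - r)"
    using r x by (intro geometric_bound_summable(2)) (auto simp: f_def theta3_coeff_def)
  also have "\<dots> < 2"
    using r by (simp add: field_simps)
  finally show ?thesis
    using sums_unique[OF theta3_moment_sums[of x 1]] x by (simp add: f_def)
qed

lemma theta3_moment2_ge:
  assumes x: "x \<ge> 1"
  shows "pi * theta_moment theta3_coeff 0 1 x \<le> theta_moment theta3_coeff 0 2 x"
proof (rule sums_le[OF _ sums_mult[OF theta3_moment_sums] theta3_moment_sums])
  fix n
  define t where "t = pi * (real n)^2 * x"
  have "t = 0 \<or> pi \<le> t"
    using x mult_mono[of 1 "real n ^ 2" 1 x] by (cases n) (auto simp: t_def)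
  then have "pi * t \<le> t^2"
    using x mult_right_mono[of pi t t] by (auto simp: t_def power2_eq_square)
  then show "pi * (theta3_coeff n * t ^ 1 * exp (- t)) \<le> theta3_coeff n * t ^ 2 * exp (- t)"
    using mult_left_mono[of "pi * t" "t^2" "theta3_coeff n * exp (- t)"]
    by (simp add: theta3_coeff_def mult_ac)
qed (use x in auto)

lemma theta3_curvature_pos:
  assumes x: "x \<ge> 1"
  shows "log_theta_curvature theta3_coeff 0 x > 0"
proof -
  define M where "M k = theta_moment theta3_coeff 0 k x" for k
  have M0: "1 \<le> M 0"
    using sum_le_suminf[OF sums_summable[OF theta3_moment_sums], of x "{0}" 0] sums_unique[OF theta3_moment_sums]
      x by (simp add: M_def theta3_coeff_def)
  have M1: "0 < M 1" "M 1 < 2"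
    using suminf_pos2[OF sums_summable[OF theta3_moment_sums], of x 1 1] sums_unique[OF theta3_moment_sums]
      theta3_moment1_lt[OF x] x
    by (simp_all add: M_def theta3_coeff_def)
  have "(pi - 1) * M 1 \<le> M 2 - M 1"
    using theta3_moment2_ge[OF x] by (simp add: M_def algebra_simps)
  moreover have "0 \<le> (pi - 1) * M 1"
    using M1 pi_gt3 by simp
  ultimately have "(pi - 1) * M 1 \<le> M 2 - M 1" "M 2 - M 1 \<le> (M 2 - M 1) * M 0"
    using M0 mult_left_mono[of 1 "M 0" "M 2 - M 1"] by simp_all
  moreover have "0 < (pi - 1 - M 1) * M 1"
    using M1 pi_gt3 by simp
  moreover have "log_theta_curvature theta3_coeff 0 x = (M 2 - M 1) * M 0 - (M 1)^2"
    using log_theta_curvature_eq[of x 0 theta3_coeff] x theta3_coeff_bound by (simp add: M_def)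
  ultimately show ?thesis
    by (simp add: power2_eq_square algebra_simps)
qed

lemma sq_sub_mult_exp_neg_strict_antimono:
  fixes s1 s2 :: real
  assumes "27/10 \<le> s1" "s1 < s2"
  shows "(s2^2 - s2) * exp (- s2) < (s1^2 - s1) * exp (- s1)"
proof -
  have "- ((s1^2 - s1) * exp (- s1)) < - ((s2^2 - s2) * exp (- s2))"
  proof (rule DERIV_pos_imp_increasing_open[OF assms(2)])
    fix s assume "s1 < s" "s < s2"
    then have "(s - 3/2)^2 > (6/5)^2"
      using assms by (intro power_strict_mono) auto
    then have "s^2 - 3 * s + 1 > 0"
      by (simp add: power2_eq_square algebra_simps)
    then have "(s^2 - 3 * s + 1) * exp (- s) > 0"
      by simp
    moreover have "((\<lambda>s. - ((s^2 - s) * exp (- s))) has_real_derivative (s^2 - 3 * s + 1) * exp (- s)) (at s)"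
      by (auto intro!: derivative_eq_intros simp: algebra_simps power2_eq_square)
    ultimately show "\<exists>y. ((\<lambda>s. - ((s^2 - s) * exp (- s))) has_real_derivative y) (at s) \<and> 0 < y"
      by blast
  qed (intro continuous_intros)
  then show ?thesis by simp
qed

lemma suminf_alternating_pos:
  fixes b :: "nat \<Rightarrow> real"
  assumes nonneg: "\<And>n. 0 \<le> b n" and decreasing: "\<And>n. b (Suc n) < b n"
    and summable: "summable (\<lambda>n. (-1)^n * b n)"
  shows "0 < (\<Sum>n. (-1)^n * b n)"
proof -
  have "b \<longlonglongrightarrow> 0"
    using tendsto_rabs_zero[OF summable_LIMSEQ_zero[OF summable]] nonneg by (simp add: abs_mult)
  then have "b 0 - b 1 \<le> (\<Sum>n. (-1)^n * b n)"
    using summable_Leibniz'(2)[of b 1] nonneg decreasing by (simp add: less_imp_le numeral_2_eq_2)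
  then show ?thesis
    using decreasing[of 0] by simp
qed

lemma pi_mult_Suc_sq_ge:
  assumes x: "x \<ge> 7/8"
  shows "27/10 \<le> pi * (real (Suc n))^2 * x"
proof -
  have "27/10 \<le> pi * x" using pi_approx(1) x mult_mono[of "3.14" pi "7/8" x] by simp
  also have "\<dots> \<le> pi * x * (real (Suc n))^2"
    using mult_left_mono[of 1 "(real (Suc n))^2" "pi * x"] x by simp
  finally show ?thesis by (simp add: mult_ac)
qed

text \<open>\<open>M\<^sub>2 - M\<^sub>1\<close> is an alternating series whose terms \<open>(t\<^sup>2 - t) e\<^sup>-\<^sup>t\<close> decrease once \<open>t \<ge> 2.7\<close>.\<close>

lemma theta4_moment2_lt_moment1:
  assumes x: "x \<ge> 7/8"
  shows "theta_moment theta4_coeff 0 2 x < theta_moment theta4_coeff 0 1 x"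
proof -
  define t where "t n = pi * (real n)^2 * x" for n
  define b where "b n = ((t (Suc n))^2 - t (Suc n)) * exp (- t (Suc n))" for n
  have t_ge: "27/10 \<le> t (Suc n)" for n
    using pi_mult_Suc_sq_ge[OF x] by (simp add: t_def)
  have "(real (Suc n))^2 < (real (Suc (Suc n)))^2" for n
    by (intro power_strict_mono) auto
  then have "t (Suc n) < t (Suc (Suc n))" for n
    using x by (simp only: t_def) simp
  then have decreasing: "b (Suc n) < b n" for n
    unfolding b_def by (intro sq_sub_mult_exp_neg_strict_antimono t_ge)
  have nonneg: "b n \<ge> 0" for n
    using t_ge[of n] by (simp add: b_def power2_eq_square)
  have "(\<lambda>n. theta4_coeff n * ((t n)^2 - t n) * exp (- t n))
      sums (theta_moment theta4_coeff 0 2 x - theta_moment theta4_coeff 0 1 x)"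
    using sums_diff[OF theta_moment_sums(1)[of x 0 theta4_coeff 2] theta_moment_sums(1)[of x 0 theta4_coeff 1]] x
    by (simp add: t_def theta_exponent_def theta4_coeff_def abs_mult algebra_simps)
  moreover have "t 0 = 0"
    by (simp add: t_def)
  ultimately have "(\<lambda>n. theta4_coeff (Suc n) * ((t (Suc n))^2 - t (Suc n)) * exp (- t (Suc n)))
      sums (theta_moment theta4_coeff 0 2 x - theta_moment theta4_coeff 0 1 x)"
    using sums_Suc_iff[where f = "\<lambda>n. theta4_coeff n * ((t n)^2 - t n) * exp (- t n)"] by simp
  moreover have "theta4_coeff (Suc n) * ((t (Suc n))^2 - t (Suc n)) * exp (- t (Suc n)) = -2 * ((-1)^n * b n)"
    for n
    by (simp add: b_def theta4_coeff_def)
  ultimately have D: "(\<lambda>n. -2 * ((-1)^n * b n))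
      sums (theta_moment theta4_coeff 0 2 x - theta_moment theta4_coeff 0 1 x)"
    by simp
  have "summable (\<lambda>n. (-1)^n * b n)"
    using summable_mult[OF sums_summable[OF D], of "-1/2"] by simp
  then have "theta_moment theta4_coeff 0 2 x - theta_moment theta4_coeff 0 1 x = -2 * (\<Sum>n. (-1)^n * b n)"
    and "0 < (\<Sum>n. (-1)^n * b n)"
    using sums_unique2[OF D sums_mult[OF summable_sums, of _ "-2"]] suminf_alternating_pos[of b, OF nonneg decreasing]
    by auto
  then show ?thesis
    by simp
qed

lemma theta4_curvature_neg:
  assumes x: "x \<ge> 7/8"
  shows "log_theta_curvature theta4_coeff 0 x < 0"
proof -
  have c: "\<And>n. \<bar>theta4_coeff n\<bar> \<le> 2"
    by (simp add: theta4_coeff_def abs_mult)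
  have "0 < theta_moment theta4_coeff 0 0 x"
    using theta_moment_sums(2)[of x 0 theta4_coeff 0] theta4_series_pos[of x] x c by simp
  then have "(theta_moment theta4_coeff 0 2 x - theta_moment theta4_coeff 0 1 x) * theta_moment theta4_coeff 0 0 x < 0"
    using theta4_moment2_lt_moment1[OF x] by (simp add: mult_neg_pos)
  moreover have "log_theta_curvature theta4_coeff 0 x
      = (theta_moment theta4_coeff 0 2 x - theta_moment theta4_coeff 0 1 x) * theta_moment theta4_coeff 0 0 x
        - (theta_moment theta4_coeff 0 1 x)^2"
    using x c by (intro log_theta_curvature_eq) auto
  ultimately show ?thesis
    using zero_le_power2[of "theta_moment theta4_coeff 0 1 x"] by linarith
qed

text \<open>With weights \<open>w\<close> and values \<open>t = a + b\<close>, \<open>(R W - A\<^sup>2) / W\<^sup>2\<close> is the variance of \<open>t\<close> minus its mean;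
  the variance is at most the second moment of \<open>b\<close>, which is assumed to be below \<open>a\<close>.\<close>

lemma weighted_variance_less_mean:
  fixes w b :: "nat \<Rightarrow> real"
  assumes W: "w sums W" and V1: "(\<lambda>n. w n * b n) sums V1" and V2: "(\<lambda>n. w n * (b n)^2) sums V2"
    and A: "(\<lambda>n. w n * (a + b n)) sums A" and R: "(\<lambda>n. w n * ((a + b n)^2 - (a + b n))) sums R"
    and nonneg: "\<And>n. 0 \<le> w n" "\<And>n. 0 \<le> b n" and pos: "0 < W" and V2_less: "V2 < a * W"
  shows "R * W - A^2 < 0"
proof -
  have "(\<lambda>n. w n * (a + b n)) = (\<lambda>n. a * w n + w n * b n)"
    by (simp add: fun_eq_iff algebra_simps)
  then have A_eq: "A = a * W + V1"
    using sums_unique2[OF A] sums_add[OF sums_mult[OF W, of a] V1] by simp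
  have "(\<lambda>n. w n * ((a + b n)^2 - (a + b n)))
      = (\<lambda>n. w n * (b n)^2 + (2 * a - 1) * (w n * b n) + (a^2 - a) * w n)"
    by (simp add: fun_eq_iff power2_eq_square algebra_simps)
  then have R_eq: "R = V2 + (2 * a - 1) * V1 + (a^2 - a) * W"
    using sums_unique2[OF R] sums_add[OF sums_add[OF V2 sums_mult[OF V1, of "2 * a - 1"]]
        sums_mult[OF W, of "a^2 - a"]]
    by simp
  have "R * W - A^2 = (V2 * W - a * W * W) - V1 * W - V1^2"
    unfolding A_eq R_eq by (simp add: power2_eq_square algebra_simps)
  moreover have "0 \<le> V1"
    using sums_le[OF _ sums_zero V1] nonneg by simp
  moreover have "V2 * W < a * W * W"
    using V2_less pos by simp
  ultimately show ?thesis
    using mult_nonneg_nonneg[of V1 W] pos zero_le_power2[of V1] by linarith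
qed

lemma theta2_tail_bound:
  assumes x: "x \<ge> 8/7"
  defines "b \<equiv> \<lambda>n. pi * x * (real n * (real n + 1))"
  shows "summable (\<lambda>n. (b n)^2 * exp (- b n))" "(\<Sum>n. (b n)^2 * exp (- b n)) < pi * x / 4"
proof -
  define r :: real where "r = exp (- (7/2))"
  have r: "0 < r" "r \<le> 8/85"
    using exp_neg_le_inverse_Taylor_quadratic[of "7/2"] by (simp_all add: r_def power_divide)
  have pi_x: "7/2 \<le> pi * x"
    using pi_approx(1) x mult_mono[of "3.14" pi "8/7" x] by simp
  have bound: "(b (Suc n))^2 * exp (- b (Suc n)) \<le> 8 * r ^ Suc n" for n
  proof -
    define m where "m = real (Suc n)"
    have "m \<le> m * m" using mult_left_mono[of 1 m m] by (simp add: m_def)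
    then have "2 * (7/2) * m \<le> (7/2) * (m * (m + 1))"
      by (simp add: algebra_simps)
    also have "\<dots> \<le> b (Suc n)"
      using pi_x mult_right_mono[of "7/2" "pi * x" "m * (m + 1)"] by (simp add: b_def m_def)
    finally have "exp (- b (Suc n) / 2) \<le> r ^ Suc n"
      unfolding r_def m_def by (rule exp_neg_half_le_power)
    then show ?thesis
      using mult_exp_neg_le_exp_neg_half(2)[of "b (Suc n)"] x by (simp add: b_def)
  qed
  have "r < 1" using r by simp
  have "summable (\<lambda>n. (b n)^2 * exp (- b n))" "(\<Sum>n. (b n)^2 * exp (- b n)) \<le> 8 * r / (1 - r)"
    by (rule geometric_bound_summable[OF _ _ r(1) \<open>r < 1\<close> bound]; simp add: b_def)+
  moreover have "8 * r / (1 - r) \<le> 64/77"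
    using r by (simp add: field_simps)
  ultimately show "summable (\<lambda>n. (b n)^2 * exp (- b n))" "(\<Sum>n. (b n)^2 * exp (- b n)) < pi * x / 4"
    using pi_x by simp_all
qed

lemma theta2_curvature_neg:
  assumes x: "x \<ge> 8/7"
  shows "log_theta_curvature (\<lambda>_. 2) (1/2) x < 0"
proof -
  define M where "M k = theta_moment (\<lambda>_. 1) (1/2) k x" for k
  define a where "a = pi * x / 4"
  define b where "b n = pi * x * (real n * (real n + 1))" for n
  define w where "w n = exp (- (a + b n))" for n
  have t_eq: "theta_exponent (1/2) n * x = a + b n" "- theta_exponent (1/2) n * x = - (a + b n)" for n
    by (simp_all add: theta_exponent_def a_def b_def power2_eq_square algebra_simps)
  have moment: "(\<lambda>n. w n * (a + b n) ^ k) sums M k" for k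
    using theta_moment_sums(1)[of x "1/2" "\<lambda>_. 1" k, unfolded t_eq] x by (simp add: M_def w_def mult_ac)
  have W: "w sums M 0" and A: "(\<lambda>n. w n * (a + b n)) sums M 1"
    using moment[of 0] moment[of 1] by simp_all
  have R: "(\<lambda>n. w n * ((a + b n)^2 - (a + b n))) sums (M 2 - M 1)"
    using sums_diff[OF moment[of 2] A] by (simp add: algebra_simps)
  have V1: "(\<lambda>n. w n * b n) sums (M 1 - a * M 0)"
    using sums_diff[OF A sums_mult[OF W, of a]] by (simp add: algebra_simps)
  define T where "T = (\<Sum>n. (b n)^2 * exp (- b n))"
  have "(\<lambda>n. w n * (b n)^2) = (\<lambda>n. exp (- a) * ((b n)^2 * exp (- b n)))"
    by (simp add: fun_eq_iff w_def mult_ac flip: exp_add)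
  then have V2: "(\<lambda>n. w n * (b n)^2) sums (exp (- a) * T)"
    unfolding T_def using theta2_tail_bound(1)[OF x, folded b_def] by (simp add: sums_mult summable_sums)
  have "exp (- a) \<le> M 0"
    using sum_le_suminf[OF sums_summable[OF W], of "{0}"] sums_unique[OF W] by (simp add: w_def b_def)
  have "T < a"
    using theta2_tail_bound(2)[OF x] by (simp add: T_def a_def b_def)
  then have "exp (- a) * T < exp (- a) * a"
    by simp
  also have "\<dots> \<le> M 0 * a"
    using \<open>exp (- a) \<le> M 0\<close> x by (intro mult_right_mono) (simp_all add: a_def)
  finally have "exp (- a) * T < a * M 0"
    by (simp add: mult.commute)
  then have "(M 2 - M 1) * M 0 - (M 1)^2 < 0"
    using \<open>exp (- a) \<le> M 0\<close> x
    by (intro weighted_variance_less_mean[OF W V1 V2 A R])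
      (auto simp: w_def b_def intro: order.strict_trans2[OF exp_gt_zero])
  moreover have "theta_moment (\<lambda>_. 2) (1/2) k x = 2 * M k" for k
    using suminf_mult[OF sums_summable[OF theta_moment_sums(1)[of x "1/2" "\<lambda>_. 1" k]], of 2] x
    by (simp add: M_def theta_moment_def mult.assoc)
  ultimately show ?thesis
    using log_theta_curvature_eq[of x "1/2" "\<lambda>_. 2"] x by (simp add: power2_eq_square algebra_simps)
qed

section \<open>Log-convexity of \<open>\<theta>\<^sub>3\<close> and log-concavity of \<open>\<theta>\<^sub>4\<close>\<close>

lemma log_theta3_reflect: "log_theta theta3_coeff 0 (- u) = log_theta theta3_coeff 0 u + u / 2"
proof -
  have "theta3 (exp (- u)) = sqrt (exp u) * theta3 (exp u)"
    using jacobi_theta3[of "exp u"] by (simp add: exp_minus inverse_eq_divide)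
  moreover have "ln (sqrt (exp u)) = u / 2"
    by (simp add: ln_sqrt)
  ultimately show ?thesis
    using theta3_series_pos[of "exp u"]
    by (simp add: log_theta_def theta3_eq_theta_series ln_mult)
qed

lemma log_theta4_reflect: "log_theta theta4_coeff 0 (- u) = log_theta (\<lambda>_. 2) (1/2) u + u / 2"
proof -
  have "theta4 (exp (- u)) = sqrt (exp u) * theta2 (exp u)"
    using jacobi_theta4[of "exp u"] by (simp add: exp_minus inverse_eq_divide)
  moreover have "ln (sqrt (exp u)) = u / 2"
    by (simp add: ln_sqrt)
  ultimately show ?thesis
    using theta2_pos[of "exp u"]
    by (simp add: log_theta_def theta4_eq_theta_series theta2_def ln_mult)
qed

lemma deriv_reflect_eq:
  fixes f g :: "real \<Rightarrow> real"
  assumes eq: "\<And>u. f (- u) = g u + u / 2"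
    and f: "\<And>u. (f has_real_derivative f' u) (at u)" and g: "\<And>u. (g has_real_derivative g' u) (at u)"
  shows "f' (- u) = - g' u - 1/2"
proof -
  have "((\<lambda>u. f (- u)) has_real_derivative f' (- u) * (- 1)) (at u)"
    by (rule DERIV_chain2[OF f]) (auto intro!: derivative_eq_intros)
  moreover have "((\<lambda>u. f (- u)) has_real_derivative g' u + 1/2) (at u)"
    unfolding eq by (auto intro!: derivative_eq_intros g)
  ultimately show ?thesis
    using DERIV_unique by fastforce
qed

lemma strict_mono_if_strict_mono_on_halves:
  fixes f :: "real \<Rightarrow> real"
  assumes right: "\<And>u v. c \<le> u \<Longrightarrow> u < v \<Longrightarrow> f u < f v"
    and left: "\<And>u v. u < v \<Longrightarrow> v \<le> c \<Longrightarrow> f u < f v"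
  shows "strict_mono f"
proof (rule strict_monoI)
  fix u v :: real assume "u < v"
  then consider "c \<le> u" | "v \<le> c" | "u < c" "c < v" by linarith
  then show "f u < f v"
    by cases (use \<open>u < v\<close> right left in \<open>auto intro: order.strict_trans[of _ "f c"]\<close>)
qed

lemma midpoint_strict_convex_if_deriv_strict_mono:
  fixes G G' :: "real \<Rightarrow> real"
  assumes D: "\<And>u. (G has_real_derivative G' u) (at u)" and M: "strict_mono G'" and "t > 0"
  shows "2 * G u < G (u + t) + G (u - t)"
proof -
  obtain z1 where z1: "u < z1" "G (u + t) - G u = t * G' z1"
    using MVT2[of u "u + t" G G'] \<open>t > 0\<close> D by auto
  obtain z2 where z2: "z2 < u" "G u - G (u - t) = t * G' z2"
    using MVT2[of "u - t" u G G'] \<open>t > 0\<close> D by auto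
  have "t * G' z2 < t * G' z1"
    using M z1(1) z2(1) \<open>t > 0\<close> by (simp add: strict_mono_def)
  then show ?thesis using z1(2) z2(2) by simp
qed

lemma has_real_derivative_log_theta3: "(log_theta theta3_coeff 0 has_real_derivative log_theta_deriv theta3_coeff 0 u) (at u)"
  by (rule has_real_derivative_log_theta) (auto simp: theta3_coeff_def intro: theta3_series_pos)

lemma has_real_derivative_log_theta4: "(log_theta theta4_coeff 0 has_real_derivative log_theta_deriv theta4_coeff 0 u) (at u)"
  by (rule has_real_derivative_log_theta) (auto simp: theta4_coeff_def abs_mult intro: theta4_series_pos)

lemma has_real_derivative_log_theta2:
  "(log_theta (\<lambda>_. 2) (1/2) has_real_derivative log_theta_deriv (\<lambda>_. 2) (1/2) u) (at u)"
  using theta2_pos[of "exp u"] by (intro has_real_derivative_log_theta) (auto simp: theta2_def)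

lemma strict_mono_log_theta3_deriv: "strict_mono (log_theta_deriv theta3_coeff 0)"
proof (rule strict_mono_if_strict_mono_on_halves[of 0])
  show right: "log_theta_deriv theta3_coeff 0 u < log_theta_deriv theta3_coeff 0 v" if "0 \<le> u" "u < v" for u v
    using log_theta_deriv_sign_mono[of 0 theta3_coeff 0 1 u v] that theta3_curvature_pos theta3_series_pos
    by (simp add: theta3_coeff_def)
  have reflect: "log_theta_deriv theta3_coeff 0 (- w) = - log_theta_deriv theta3_coeff 0 w - 1/2" for w
    by (rule deriv_reflect_eq[OF log_theta3_reflect has_real_derivative_log_theta3 has_real_derivative_log_theta3])
  fix u v :: real assume "u < v" "v \<le> 0"
  then show "log_theta_deriv theta3_coeff 0 u < log_theta_deriv theta3_coeff 0 v"
    using right[of "- v" "- u"] reflect[of "- u"] reflect[of "- v"] by simp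
qed

lemma strict_mono_neg_log_theta4_deriv: "strict_mono (\<lambda>u. - log_theta_deriv theta4_coeff 0 u)"
proof (rule strict_mono_if_strict_mono_on_halves[of "ln (7/8)"])
  fix u v :: real assume "ln (7/8) \<le> u" "u < v"
  then show "- log_theta_deriv theta4_coeff 0 u < - log_theta_deriv theta4_coeff 0 v"
    using log_theta_deriv_sign_mono[of 0 theta4_coeff "ln (7/8)" "-1" u v] theta4_curvature_neg
      theta4_series_pos
    by (simp add: theta4_coeff_def abs_mult)
next
  have theta2_decreasing: "log_theta_deriv (\<lambda>_. 2) (1/2) v < log_theta_deriv (\<lambda>_. 2) (1/2) u"
    if "ln (8/7) \<le> u" "u < v" for u v
    using log_theta_deriv_sign_mono[of "1/2" "\<lambda>_. 2" "ln (8/7)" "-1" u v] that theta2_curvature_neg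
      theta2_pos
    by (simp add: theta2_def)
  have reflect: "log_theta_deriv theta4_coeff 0 (- w) = - log_theta_deriv (\<lambda>_. 2) (1/2) w - 1/2" for w
    by (rule deriv_reflect_eq[OF log_theta4_reflect has_real_derivative_log_theta4 has_real_derivative_log_theta2])
  fix u v :: real assume "u < v" "v \<le> ln (7/8)"
  moreover have "ln (7/8::real) = - ln (8/7)"
    by (simp add: ln_div)
  ultimately show "- log_theta_deriv theta4_coeff 0 u < - log_theta_deriv theta4_coeff 0 v"
    using theta2_decreasing[of "- v" "- u"] reflect[of "- u"] reflect[of "- v"] by simp
qed

lemma square_less_mult_if_log_exp_strictly_convex:
  fixes f :: "real \<Rightarrow> real"
  assumes pos: "\<And>x. x > 0 \<Longrightarrow> f x > 0"
    and D: "\<And>u. ((\<lambda>u. ln (f (exp u))) has_real_derivative Q u) (at u)" and M: "strict_mono Q"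
    and "r > 0" "s > 0" "s \<noteq> 1"
  shows "f r ^ 2 < f (r * s) * f (r / s)"
proof -
  define G where "G u = ln (f (exp u))" for u
  have "\<bar>ln s\<bar> > 0" using \<open>s > 0\<close> \<open>s \<noteq> 1\<close> by simp
  from midpoint_strict_convex_if_deriv_strict_mono[OF D[folded G_def] M this, of "ln r"]
  have "2 * G (ln r) < G (ln r + ln s) + G (ln r - ln s)"
    by (cases "ln s \<ge> 0") (simp_all add: add.commute)
  then have "ln (f r ^ 2) < ln (f (r * s) * f (r / s))"
    using \<open>r > 0\<close> \<open>s > 0\<close> pos[of r] pos[of "r * s"] pos[of "r / s"]
    by (simp add: G_def ln_mult power2_eq_square exp_add exp_diff)
  then show ?thesis
    using \<open>r > 0\<close> \<open>s > 0\<close> pos[of r] pos[of "r * s"] pos[of "r / s"] by simp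
qed

lemma theta3_mult_gt_square:
  assumes "r > 0" "s > 0" "s \<noteq> 1"
  shows "theta3 (r * s) * theta3 (r / s) > theta3 r ^ 2"
proof (rule square_less_mult_if_log_exp_strictly_convex[OF _ _ strict_mono_log_theta3_deriv assms])
  show "theta3 x > 0" if "x > 0" for x
    using that theta3_series_pos by (simp add: theta3_eq_theta_series)
  show "((\<lambda>u. ln (theta3 (exp u))) has_real_derivative log_theta_deriv theta3_coeff 0 u) (at u)" for u
    using has_real_derivative_log_theta3 by (simp add: log_theta_def[abs_def] theta3_eq_theta_series)
qed

lemma theta4_mult_lt_square:
  assumes "r > 0" "s > 0" "s \<noteq> 1"
  shows "theta4 (r * s) * theta4 (r / s) < theta4 r ^ 2"
proof -
  have pos: "theta4 x > 0" if "x > 0" for x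
    using that theta4_series_pos by (simp add: theta4_eq_theta_series)
  have "inverse (theta4 r) ^ 2 < inverse (theta4 (r * s)) * inverse (theta4 (r / s))"
  proof (rule square_less_mult_if_log_exp_strictly_convex[OF _ _ strict_mono_neg_log_theta4_deriv assms])
    show "((\<lambda>u. ln (inverse (theta4 (exp u)))) has_real_derivative - log_theta_deriv theta4_coeff 0 u) (at u)"
      for u
      using DERIV_minus[OF has_real_derivative_log_theta4] theta4_series_pos
      by (simp add: log_theta_def[abs_def] theta4_eq_theta_series ln_inverse)
  qed (simp add: pos)
  then show ?thesis
    using pos[of r] pos[of "r * s"] pos[of "r / s"] assms
    by (simp add: power2_eq_square flip: inverse_mult_distrib)
qed

theorem theorem2:
  fixes r s :: real
  assumes "r > 0" and "s > 0"
  shows "theta3 (r * s) * theta3 (r / s) \<ge> (theta3 r)^2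
       \<and> theta4 (r * s) * theta4 (r / s) \<le> (theta4 r)^2
       \<and> (theta3 (r * s) * theta3 (r / s) = (theta3 r)^2 \<longrightarrow> s = 1)
       \<and> (theta4 (r * s) * theta4 (r / s) = (theta4 r)^2 \<longrightarrow> s = 1)"
proof (cases "s = 1")
  case False
  then show ?thesis
    using theta3_mult_gt_square[OF assms False] theta4_mult_lt_square[OF assms False] by auto
qed (simp add: power2_eq_square)

end
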